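(* Consider a multi-sender single-uniprior index-coding instance with binary messages, information-flow graph $\mathcal{G}$ and message graph $\mathcal{U}$, and let $\mathcal{V}_S$ be the vertex set of a message-disconnected leaf SCC of $\mathcal{G}$. Then for any index code for this instance, every message $x_j$ with $j\in\mathcal{V}_S$ is a function of the transmitted codeword alone (the concatenation of all senders' outputs); i.e., any receiver can decode all messages of $\mathcal{V}_S$, even without using its own prior message.
   Context: Multi-sender single-uniprior index coding with binary messages: there are $n$ receivers and $n$ independent messages $x_1,\dots,x_n$, each a single bit uniformly distributed on $\{0,1\}$. Receiver $i$ knows $x_i$ a priori and requests a set of messages not containing $x_i$. The information-flow graph is the directed graph $\mathcal{G}=(\mathcal{V},\mathcal{A})$, $\mathcal{V}=\{1,\dots,n\}$, with an arc $(j\to i)$ iff receiver $i$ requests $x_j$. There are $S$ senders; sender $s$ knows a subset $\mathcal{M}_s$ of the messages, and every message is known to some sender. An index code consists of, for each sender $s$, an encoding function mapping the messages in $\mathcal{M}_s$ to $\ell_s$ bits, and for each receiver $i$ a decoding function that, from all senders' outputs together with $x_i$, returns every message requested by $i$, for all message values. The message graph $\mathcal{U}$ is the undirected graph on $\mathcal{V}$ with an edge $\{i,j\}$ iff some sender knows both $x_i$ and $x_j$. A leaf SCC of $\mathcal{G}$ is a strongly connected component with at least two vertices and no arc from it to a vertex outside it. A leaf SCC with vertex set $\mathcal{V}_S$ is message-disconnected iff there are two vertices in $\mathcal{V}_S$ that are not joined by any path in $\mathcal{U}$ (paths may use any vertices of $\mathcal{U}$). *)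

theory Defs
  imports Main
begin

text \<open>Vertices (receivers/messages) are 0..n-1, senders are 0..S-1.
  R i = set of messages requested by receiver i; M s = messages known by sender s.\<close>

definition ic_instance :: "nat \<Rightarrow> nat \<Rightarrow> (nat \<Rightarrow> nat set) \<Rightarrow> (nat \<Rightarrow> nat set) \<Rightarrow> bool" where
  "ic_instance n S R M \<longleftrightarrow>
     (\<forall>i<n. R i \<subseteq> {..<n} \<and> i \<notin> R i) \<and>
     (\<forall>s<S. M s \<subseteq> {..<n}) \<and>
     (\<forall>j<n. \<exists>s<S. j \<in> M s)"

definition flow_arcs :: "nat \<Rightarrow> (nat \<Rightarrow> nat set) \<Rightarrow> (nat \<times> nat) set" where
  "flow_arcs n R = {(j, i). i < n \<and> j \<in> R i}"

definition msg_edges :: "nat \<Rightarrow> (nat \<Rightarrow> nat set) \<Rightarrow> (nat \<times> nat) set" where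
  "msg_edges S M = {(i, j). i \<noteq> j \<and> (\<exists>s<S. i \<in> M s \<and> j \<in> M s)}"

definition is_scc :: "nat \<Rightarrow> (nat \<times> nat) set \<Rightarrow> nat set \<Rightarrow> bool" where
  "is_scc n A C \<longleftrightarrow> C \<subseteq> {..<n} \<and> C \<noteq> {} \<and>
     (\<forall>u\<in>C. \<forall>v\<in>C. (u, v) \<in> A\<^sup>*) \<and>
     (\<forall>u\<in>C. \<forall>w<n. (u, w) \<in> A\<^sup>* \<and> (w, u) \<in> A\<^sup>* \<longrightarrow> w \<in> C)"

definition is_leaf_scc :: "nat \<Rightarrow> (nat \<times> nat) set \<Rightarrow> nat set \<Rightarrow> bool" where
  "is_leaf_scc n A C \<longleftrightarrow> is_scc n A C \<and> 2 \<le> card C \<and>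
     (\<forall>u\<in>C. \<forall>w. (u, w) \<in> A \<longrightarrow> w \<in> C)"

definition message_disconnected :: "nat \<Rightarrow> (nat \<Rightarrow> nat set) \<Rightarrow> nat set \<Rightarrow> bool" where
  "message_disconnected S M C \<longleftrightarrow> (\<exists>a\<in>C. \<exists>b\<in>C. (a, b) \<notin> (msg_edges S M)\<^sup>*)"

text \<open>An index code: encoders enc s mapping the message vector x to a bit string of length
  l s that depends only on the messages in M s; decoders dec i taking all senders' outputs
  and the prior x_i, returning (as a function of the message index) the requested messages.\<close>
definition is_index_code ::
  "nat \<Rightarrow> nat \<Rightarrow> (nat \<Rightarrow> nat set) \<Rightarrow> (nat \<Rightarrow> nat set) \<Rightarrow> (nat \<Rightarrow> nat)
   \<Rightarrow> (nat \<Rightarrow> (nat \<Rightarrow> bool) \<Rightarrow> bool list)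
   \<Rightarrow> (nat \<Rightarrow> (nat \<Rightarrow> bool list) \<Rightarrow> bool \<Rightarrow> nat \<Rightarrow> bool) \<Rightarrow> bool" where
  "is_index_code n S R M l enc dec \<longleftrightarrow>
     (\<forall>s<S. \<forall>x. length (enc s x) = l s) \<and>
     (\<forall>s<S. \<forall>x y. (\<forall>m\<in>M s. x m = y m) \<longrightarrow> enc s x = enc s y) \<and>
     (\<forall>x. \<forall>i<n. \<forall>j\<in>R i.
        dec i (\<lambda>s. if s < S then enc s x else []) (x i) j = x j)"

end

theory Submission
  imports Defs
begin

text \<open>Let x and y be message vectors with the same codeword. Receiver i decodes its requests
  from the codeword and x_i alone, so if x and y agree at i they agree at everything i requests;
  agreement therefore propagates backwards along the arcs of the information-flow graph, and
  inside a strongly connected component agreement at one vertex forces agreement everywhere.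
  Pick a, b in the component that are not connected in the message graph and let K be the
  message-graph component of a. Every sender's knowledge lies inside K or is disjoint from it,
  so the hybrid vector z equal to x on K and to y off K has the same codeword as x and y.
  Since z agrees with x at a, it agrees with x at b, i.e. x b = y b, and hence x and y agree on
  the whole component.\<close>

definition codeword :: "nat \<Rightarrow> (nat \<Rightarrow> (nat \<Rightarrow> bool) \<Rightarrow> bool list) \<Rightarrow> (nat \<Rightarrow> bool) \<Rightarrow> nat \<Rightarrow> bool list"
  where "codeword S enc x = (\<lambda>s. if s < S then enc s x else [])"

lemma index_code_agree_along_flow_path:
  assumes code: "is_index_code n S R M l enc dec"
    and same: "codeword S enc x = codeword S enc y"
    and path: "(u, v) \<in> (flow_arcs n R)\<^sup>*"
    and agree: "x v = y v"
  shows "x u = y u"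
  using path agree
proof (induction rule: converse_rtrancl_induct)
  case base
  then show ?case .
next
  case (step u w)
  then have "w < n" "u \<in> R w" "x w = y w"
    unfolding flow_arcs_def by auto
  then have "dec w (codeword S enc x) (x w) u = dec w (codeword S enc y) (y w) u"
    using same by simp
  with code \<open>w < n\<close> \<open>u \<in> R w\<close> show ?case
    unfolding is_index_code_def codeword_def by simp
qed

lemma sender_inside_or_outside_msg_component:
  assumes "s < S"
  shows "M s \<subseteq> (msg_edges S M)\<^sup>* `` {a} \<or> M s \<inter> (msg_edges S M)\<^sup>* `` {a} = {}"
proof (rule disjCI)
  assume "M s \<inter> (msg_edges S M)\<^sup>* `` {a} \<noteq> {}"
  then obtain m where m: "m \<in> M s" "(a, m) \<in> (msg_edges S M)\<^sup>*" by blast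
  show "M s \<subseteq> (msg_edges S M)\<^sup>* `` {a}"
  proof
    fix m' assume "m' \<in> M s"
    with m \<open>s < S\<close> have "m' = m \<or> (m, m') \<in> msg_edges S M"
      unfolding msg_edges_def by blast
    with m(2) show "m' \<in> (msg_edges S M)\<^sup>* `` {a}"
      by (auto intro: rtrancl_into_rtrancl)
  qed
qed

lemma codeword_hybrid:
  assumes code: "is_index_code n S R M l enc dec"
    and same: "codeword S enc x = codeword S enc y"
    and split: "\<And>s. s < S \<Longrightarrow> M s \<subseteq> K \<or> M s \<inter> K = {}"
  shows "codeword S enc (\<lambda>m. if m \<in> K then x m else y m) = codeword S enc x"
proof
  fix s
  have local: "enc s x' = enc s y'" if "s < S" "\<forall>m\<in>M s. x' m = y' m" for x' y'
    using code that unfolding is_index_code_def by blast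
  have "enc s (\<lambda>m. if m \<in> K then x m else y m) = enc s x" if "s < S"
  proof (cases "M s \<subseteq> K")
    case True
    with \<open>s < S\<close> show ?thesis by (intro local) auto
  next
    case False
    with split \<open>s < S\<close> have "M s \<inter> K = {}" by blast
    with \<open>s < S\<close> have "enc s (\<lambda>m. if m \<in> K then x m else y m) = enc s y"
      by (intro local) auto
    also have "\<dots> = enc s x"
      using fun_cong[OF same, of s] \<open>s < S\<close> by (simp add: codeword_def)
    finally show ?thesis .
  qed
  then show "codeword S enc (\<lambda>m. if m \<in> K then x m else y m) s = codeword S enc x s"
    by (simp add: codeword_def)
qed

lemma codeword_determines_disconnected_leaf_scc:
  assumes code: "is_index_code n S R M l enc dec"
    and leaf: "is_leaf_scc n (flow_arcs n R) VS"
    and disc: "message_disconnected S M VS"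
    and same: "codeword S enc x = codeword S enc y"
  shows "\<forall>j\<in>VS. x j = y j"
proof -
  have strong: "\<forall>u\<in>VS. \<forall>v\<in>VS. (u, v) \<in> (flow_arcs n R)\<^sup>*"
    using leaf unfolding is_leaf_scc_def is_scc_def by blast
  obtain a b where ab: "a \<in> VS" "b \<in> VS" "(a, b) \<notin> (msg_edges S M)\<^sup>*"
    using disc unfolding message_disconnected_def by blast
  define K where "K = (msg_edges S M)\<^sup>* `` {a}"
  define z where "z m = (if m \<in> K then x m else y m)" for m
  have "codeword S enc z = codeword S enc x"
    unfolding z_def K_def
    by (rule codeword_hybrid[OF code same sender_inside_or_outside_msg_component])
  moreover have "z a = x a" by (simp add: z_def K_def)
  moreover have "(b, a) \<in> (flow_arcs n R)\<^sup>*"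
    using strong ab by blast
  ultimately have "z b = x b"
    using index_code_agree_along_flow_path[OF code, of z x b a] by blast
  then have "x b = y b"
    using ab(3) by (simp add: z_def K_def)
  then show ?thesis
    using index_code_agree_along_flow_path[OF code same] strong ab by blast
qed

theorem lemma11:
  assumes "ic_instance n S R M"
    and "is_leaf_scc n (flow_arcs n R) VS"
    and "message_disconnected S M VS"
    and "is_index_code n S R M l enc dec"
  shows "\<exists>f. \<forall>x. \<forall>j\<in>VS. f (\<lambda>s. if s < S then enc s x else []) j = x j"
proof -
  define f where "f c = (SOME x. codeword S enc x = c)" for c
  have "f (codeword S enc x) j = x j" if "j \<in> VS" for x j
  proof -
    have "codeword S enc (f (codeword S enc x)) = codeword S enc x"
      unfolding f_def by (rule someI[where x = x]) (rule refl)
    then show ?thesis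
      using codeword_determines_disconnected_leaf_scc[OF assms(4,2,3)] that by blast
  qed
  then show ?thesis
    unfolding codeword_def by blast
qed

end
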